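(* If $G$ is a quasitopological group, then $G$ and $\tau(G)$ have exactly the same open subgroups. In particular, for any based space $X$, $\pi_1^{qtop}(X)$ and $\pi_1^{\tau}(X)$ have the same open subgroups.
   Context: A quasitopological group is a group with a topology in which inversion is continuous and multiplication is separately continuous in each variable. $F_M(S)$ is the free (Markov) topological group on a space $S$. For a group with topology $G$, $\tau(G)$ is $G$ with the quotient topology with respect to the multiplication epimorphism $m_G:F_M(G)\to G$ sending each generator $g$ to $g$. For a based space $X$, $\pi_1^{qtop}(X)$ is $\pi_1(X)$ with the quotient topology from the based loop space $\Omega(X)$ (compact-open topology) via $\alpha\mapsto[\alpha]$; it is a quasitopological group. $\pi_1^{\tau}(X)=\tau(\pi_1^{qtop}(X))$. *)

theory Defs
  imports "HOL-Analysis.Analysis" "HOL-Algebra.Group"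
begin

text \<open>Quotient topology on the set Y induced by f from the space X: U is open iff
  U is a subset of Y and its preimage is open in X.  (This family is already a topology.)\<close>
definition quot_top :: "'a topology \<Rightarrow> ('a \<Rightarrow> 'b) \<Rightarrow> 'b set \<Rightarrow> 'b topology" where
  "quot_top X f Y = topology_generated_by
      {U. U \<subseteq> Y \<and> openin X {x \<in> topspace X. f x \<in> U}}"

definition quasitopological_group :: "('g, 'm) monoid_scheme \<Rightarrow> 'g topology \<Rightarrow> bool" where
  "quasitopological_group G T \<longleftrightarrow> group G \<and> topspace T = carrier G \<and>
     continuous_map T T (\<lambda>x. inv\<^bsub>G\<^esub> x) \<and>
     (\<forall>g \<in> carrier G. continuous_map T T (\<lambda>x. g \<otimes>\<^bsub>G\<^esub> x) \<and>
                      continuous_map T T (\<lambda>x. x \<otimes>\<^bsub>G\<^esub> g))"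

definition group_topology :: "('g, 'm) monoid_scheme \<Rightarrow> 'g topology \<Rightarrow> bool" where
  "group_topology G T \<longleftrightarrow> topspace T = carrier G \<and>
     continuous_map (prod_topology T T) T (\<lambda>p. fst p \<otimes>\<^bsub>G\<^esub> snd p) \<and>
     continuous_map T T (\<lambda>x. inv\<^bsub>G\<^esub> x)"

text \<open>A letter (x, True) stands for the generator x, (x, False) for its inverse.\<close>
definition reduced_word :: "('a \<times> bool) list \<Rightarrow> bool" where
  "reduced_word w \<longleftrightarrow> (\<forall>i. Suc i < length w \<longrightarrow>
      \<not> (fst (w ! i) = fst (w ! Suc i) \<and> snd (w ! i) \<noteq> snd (w ! Suc i)))"

fun red_cons :: "'a \<times> bool \<Rightarrow> ('a \<times> bool) list \<Rightarrow> ('a \<times> bool) list" where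
  "red_cons l [] = [l]"
| "red_cons l (m # ys) =
     (if fst l = fst m \<and> snd l \<noteq> snd m then ys else l # m # ys)"

definition free_grp :: "'a set \<Rightarrow> ('a \<times> bool) list monoid" where
  "free_grp S = \<lparr> carrier = {w. reduced_word w \<and> fst ` set w \<subseteq> S},
                  mult = (\<lambda>u v. foldr red_cons u v),
                  one = [] \<rparr>"

text \<open>The free (Markov) topological group F_M(X): the free group on the points of X with
  the finest group topology making the inclusion of generators continuous.\<close>
definition free_top :: "'a topology \<Rightarrow> ('a \<times> bool) list topology" where
  "free_top X = topology_generated_by
     (\<Union> {Collect (openin T) | T. group_topology (free_grp (topspace X)) T \<and>
                               continuous_map X T (\<lambda>s. [(s, True)])})"

definition mult_epi :: "('g, 'm) monoid_scheme \<Rightarrow> ('g \<times> bool) list \<Rightarrow> 'g" where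
  "mult_epi G w = foldr (\<lambda>l acc. (if snd l then fst l else inv\<^bsub>G\<^esub> (fst l)) \<otimes>\<^bsub>G\<^esub> acc) w \<one>\<^bsub>G\<^esub>"

definition tau_top :: "('g, 'm) monoid_scheme \<Rightarrow> 'g topology \<Rightarrow> 'g topology" where
  "tau_top G T = quot_top (free_top T) (mult_epi G) (carrier G)"

definition loop_space :: "'a topology \<Rightarrow> 'a \<Rightarrow> (real \<Rightarrow> 'a) set" where
  "loop_space X x0 = {g. pathin X g \<and> g 0 = x0 \<and> g 1 = x0}"

definition loop_top :: "'a topology \<Rightarrow> 'a \<Rightarrow> (real \<Rightarrow> 'a) topology" where
  "loop_top X x0 = topology_generated_by
     {{g \<in> loop_space X x0. g ` K \<subseteq> U} | K U.
        compactin (top_of_set {0..1}) K \<and> openin X U}"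

definition path_homotopic :: "'a topology \<Rightarrow> 'a \<Rightarrow> (real \<Rightarrow> 'a) \<Rightarrow> (real \<Rightarrow> 'a) \<Rightarrow> bool" where
  "path_homotopic X x0 g h \<longleftrightarrow>
     homotopic_with (\<lambda>k. k 0 = x0 \<and> k 1 = x0) (top_of_set {0..1}) X g h"

definition loop_class :: "'a topology \<Rightarrow> 'a \<Rightarrow> (real \<Rightarrow> 'a) \<Rightarrow> (real \<Rightarrow> 'a) set" where
  "loop_class X x0 g = {h \<in> loop_space X x0. path_homotopic X x0 g h}"

definition loop_concat :: "(real \<Rightarrow> 'a) \<Rightarrow> (real \<Rightarrow> 'a) \<Rightarrow> real \<Rightarrow> 'a" where
  "loop_concat g h = (\<lambda>t. if t \<le> 1/2 then g (2 * t) else h (2 * t - 1))"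

definition fund_group :: "'a topology \<Rightarrow> 'a \<Rightarrow> (real \<Rightarrow> 'a) set monoid" where
  "fund_group X x0 = \<lparr> carrier = loop_class X x0 ` loop_space X x0,
     mult = (\<lambda>A B. loop_class X x0 (loop_concat (SOME g. g \<in> A) (SOME h. h \<in> B))),
     one = loop_class X x0 (\<lambda>t. x0) \<rparr>"

definition fund_group_qtop :: "'a topology \<Rightarrow> 'a \<Rightarrow> (real \<Rightarrow> 'a) set topology" where
  "fund_group_qtop X x0 = quot_top (loop_top X x0) (loop_class X x0) (carrier (fund_group X x0))"

end

theory Submission
  imports Defs
begin

(* If H is an open subgroup of G, the two-sided translates b H a\<inverse> of H generate a group topology
   on G coarser than the given one.  Its pullback along m_G is a group topology on the free group
   in which the generators vary continuously, hence coarser than the Markov topology; so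
   m_G\<inverse>(H) is open in F_M(G), i.e. H is open in \<tau>(G).  Conversely \<tau>(G) is finer than G
   because m_G splits the continuous inclusion of the generators. *)

section \<open>Reduced words form a group\<close>

definition cancels :: "'a \<times> bool \<Rightarrow> 'a \<times> bool \<Rightarrow> bool" where
  "cancels l m \<longleftrightarrow> fst l = fst m \<and> snd l \<noteq> snd m"

definition letter_inv :: "'a \<times> bool \<Rightarrow> 'a \<times> bool" where
  "letter_inv l = (fst l, \<not> snd l)"

lemma red_cons_Cons: "red_cons l (m # ys) = (if cancels l m then ys else l # m # ys)"
  by (simp add: cancels_def)

declare red_cons.simps(2)[simp del]

lemma reduced_word_iff_nth:
  "reduced_word w \<longleftrightarrow> (\<forall>i. Suc i < length w \<longrightarrow> \<not> cancels (w ! i) (w ! Suc i))"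
  by (simp add: reduced_word_def cancels_def)

lemma reduced_word_Nil [simp]: "reduced_word []"
  by (simp add: reduced_word_def)

lemma reduced_word_single [simp]: "reduced_word [l]"
  by (simp add: reduced_word_def)

lemma reduced_word_Cons_Cons:
  "reduced_word (l # m # ys) \<longleftrightarrow> \<not> cancels l m \<and> reduced_word (m # ys)"
  unfolding reduced_word_iff_nth
proof safe
  fix i assume "\<forall>i. Suc i < length (l # m # ys) \<longrightarrow> \<not> cancels ((l # m # ys) ! i) ((l # m # ys) ! Suc i)"
  then show "cancels l m \<Longrightarrow> False"
    and "Suc i < length (m # ys) \<Longrightarrow> cancels ((m # ys) ! i) ((m # ys) ! Suc i) \<Longrightarrow> False"
    by (auto dest: spec[of _ 0] spec[of _ "Suc i"])
next
  fix i assume "\<not> cancels l m" "\<forall>i. Suc i < length (m # ys) \<longrightarrow> \<not> cancels ((m # ys) ! i) ((m # ys) ! Suc i)"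
    and "Suc i < length (l # m # ys)" "cancels ((l # m # ys) ! i) ((l # m # ys) ! Suc i)"
  then show False by (cases i) auto
qed

lemma reduced_word_ConsD: "reduced_word (l # ys) \<Longrightarrow> reduced_word ys"
  by (cases ys) (auto simp: reduced_word_Cons_Cons)

lemma reduced_word_red_cons: "reduced_word w \<Longrightarrow> reduced_word (red_cons l w)"
  by (cases w) (auto simp: red_cons_Cons reduced_word_Cons_Cons dest: reduced_word_ConsD)

lemma fst_set_red_cons: "fst ` set (red_cons l w) \<subseteq> insert (fst l) (fst ` set w)"
  by (cases w) (auto simp: red_cons_Cons)

lemma cancels_cancels_eq: "cancels l m \<Longrightarrow> cancels m a \<Longrightarrow> l = a"
  by (cases l; cases m; cases a) (auto simp: cancels_def)

lemma red_cons_red_cons_cancel: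
  assumes "reduced_word z" "cancels l m"
  shows "red_cons l (red_cons m z) = z"
proof (cases z)
  case (Cons a ys)
  show ?thesis
  proof (cases "cancels m a")
    case True
    then have "red_cons m z = ys" "l = a"
      using Cons cancels_cancels_eq[OF assms(2)] by (auto simp: red_cons_Cons)
    then show ?thesis
      using Cons assms(1) by (cases ys) (auto simp: red_cons_Cons reduced_word_Cons_Cons)
  qed (use Cons assms in \<open>simp add: red_cons_Cons\<close>)
qed (use assms in \<open>simp add: red_cons_Cons\<close>)

lemma reduced_word_foldr_red_cons: "reduced_word v \<Longrightarrow> reduced_word (foldr red_cons u v)"
  by (induction u) (auto intro: reduced_word_red_cons)

lemma fst_set_foldr_red_cons: "fst ` set (foldr red_cons u v) \<subseteq> fst ` set u \<union> fst ` set v"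
proof (induction u)
  case (Cons a u)
  then show ?case
    using fst_set_red_cons[of a "foldr red_cons u v"] by simp blast
qed simp

lemma foldr_red_cons_red_cons:
  assumes "reduced_word w" "reduced_word z"
  shows "foldr red_cons (red_cons l w) z = red_cons l (foldr red_cons w z)"
proof (cases w)
  case (Cons m ys)
  have "reduced_word (foldr red_cons ys z)"
    using assms by (intro reduced_word_foldr_red_cons)
  then show ?thesis
    using Cons by (simp add: red_cons_Cons red_cons_red_cons_cancel)
qed simp

lemma foldr_red_cons_assoc:
  assumes "reduced_word x" "reduced_word y" "reduced_word z"
  shows "foldr red_cons (foldr red_cons x y) z = foldr red_cons x (foldr red_cons y z)"
  using assms(1)
proof (induction x)
  case (Cons l x)
  then have "reduced_word x" by (blast dest: reduced_word_ConsD)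
  then show ?case
    using Cons.IH assms(2,3) by (simp add: foldr_red_cons_red_cons reduced_word_foldr_red_cons)
qed simp

lemma foldr_red_cons_inverse:
  "reduced_word x \<Longrightarrow> foldr red_cons (rev (map letter_inv x)) x = []"
proof (induction x)
  case (Cons l x)
  have "red_cons (letter_inv l) (l # x) = x"
    by (simp add: red_cons_Cons cancels_def letter_inv_def)
  then show ?case
    using Cons.IH reduced_word_ConsD[OF Cons.prems] by simp
qed simp

lemma reduced_word_rev_letter_inv:
  assumes "reduced_word x"
  shows "reduced_word (rev (map letter_inv x))"
  unfolding reduced_word_iff_nth
proof (intro allI impI)
  fix i assume i: "Suc i < length (rev (map letter_inv x))"
  let ?j = "length x - Suc (Suc i)"
  have "\<not> cancels (x ! ?j) (x ! Suc ?j)"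
    using assms i unfolding reduced_word_iff_nth by auto
  moreover have "Suc ?j = length x - Suc i" using i by simp
  ultimately show "\<not> cancels (rev (map letter_inv x) ! i) (rev (map letter_inv x) ! Suc i)"
    using i by (auto simp: rev_nth cancels_def letter_inv_def)
qed

lemma group_free_grp: "group (free_grp S)"
proof (rule groupI)
  fix x y assume "x \<in> carrier (free_grp S)" "y \<in> carrier (free_grp S)"
  then show "x \<otimes>\<^bsub>free_grp S\<^esub> y \<in> carrier (free_grp S)"
    using fst_set_foldr_red_cons[of x y] by (simp add: free_grp_def reduced_word_foldr_red_cons) blast
next
  fix x assume x: "x \<in> carrier (free_grp S)"
  show "\<exists>y\<in>carrier (free_grp S). y \<otimes>\<^bsub>free_grp S\<^esub> x = \<one>\<^bsub>free_grp S\<^esub>"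
  proof
    show "rev (map letter_inv x) \<otimes>\<^bsub>free_grp S\<^esub> x = \<one>\<^bsub>free_grp S\<^esub>"
      using x by (simp add: free_grp_def foldr_red_cons_inverse)
    show "rev (map letter_inv x) \<in> carrier (free_grp S)"
      using x by (auto simp: free_grp_def reduced_word_rev_letter_inv letter_inv_def)
  qed
qed (auto simp: free_grp_def foldr_red_cons_assoc)

abbreviation free_gen :: "'a \<Rightarrow> ('a \<times> bool) list" where
  "free_gen s \<equiv> [(s, True)]"

lemma free_gen_in_carrier: "s \<in> S \<Longrightarrow> free_gen s \<in> carrier (free_grp S)"
  by (simp add: free_grp_def)

context group
begin

lemma mult_epi_Cons:
  "mult_epi G (l # w) = (if snd l then fst l else inv (fst l)) \<otimes> mult_epi G w"
  by (simp add: mult_epi_def)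

lemma mult_epi_closed: "fst ` set w \<subseteq> carrier G \<Longrightarrow> mult_epi G w \<in> carrier G"
  by (induction w) (auto simp: mult_epi_Cons, simp add: mult_epi_def)

lemma mult_epi_free_gen [simp]: "s \<in> carrier G \<Longrightarrow> mult_epi G (free_gen s) = s"
  by (simp add: mult_epi_def)

lemma mult_epi_red_cons:
  assumes "fst l \<in> carrier G" "fst ` set w \<subseteq> carrier G"
  shows "mult_epi G (red_cons l w) = (if snd l then fst l else inv (fst l)) \<otimes> mult_epi G w"
proof (cases w)
  case Nil then show ?thesis by (simp add: mult_epi_def)
next
  case (Cons m ys)
  have "mult_epi G ys \<in> carrier G"
    using assms Cons by (auto intro: mult_epi_closed)
  then show ?thesis
    using assms Cons
    by (cases "snd m") (auto simp: red_cons_Cons mult_epi_Cons cancels_def m_assoc[symmetric])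
qed

lemma mult_epi_foldr_red_cons:
  assumes "fst ` set u \<subseteq> carrier G" "fst ` set v \<subseteq> carrier G"
  shows "mult_epi G (foldr red_cons u v) = mult_epi G u \<otimes> mult_epi G v"
  using assms(1)
proof (induction u)
  case Nil
  then show ?case using mult_epi_closed[OF assms(2)] by (simp add: mult_epi_def)
next
  case (Cons l u)
  have "fst ` set (foldr red_cons u v) \<subseteq> carrier G"
    using fst_set_foldr_red_cons[of u v] Cons.prems assms(2) by simp blast
  then show ?case
    using Cons assms(2) by (simp add: mult_epi_red_cons mult_epi_Cons m_assoc mult_epi_closed)
qed

lemma group_hom_mult_epi: "group_hom (free_grp (carrier G)) G (mult_epi G)"
proof -
  have "mult_epi G \<in> hom (free_grp (carrier G)) G"
    by (rule homI) (auto simp: free_grp_def mult_epi_closed mult_epi_foldr_red_cons)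
  then show ?thesis
    by (simp add: group_hom_def group_hom_axioms_def group_free_grp is_group)
qed

end

lemma openin_quot_top:
  "openin (quot_top X f Y) U \<longleftrightarrow> U \<subseteq> Y \<and> openin X {x \<in> topspace X. f x \<in> U}"
proof
  assume "openin (quot_top X f Y) U"
  then have "generate_topology_on {U. U \<subseteq> Y \<and> openin X {x \<in> topspace X. f x \<in> U}} U"
    unfolding quot_top_def by (rule openin_topology_generated_by)
  then show "U \<subseteq> Y \<and> openin X {x \<in> topspace X. f x \<in> U}"
  proof induction
    case (Int a b)
    have "{x \<in> topspace X. f x \<in> a \<inter> b} = {x \<in> topspace X. f x \<in> a} \<inter> {x \<in> topspace X. f x \<in> b}"
      by blast
    then show ?case using Int by (simp add: openin_Int le_infI1)
  next
    case (UN K)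
    have "{x \<in> topspace X. f x \<in> \<Union>K} = (\<Union>k\<in>K. {x \<in> topspace X. f x \<in> k})"
      by blast
    moreover have "openin X (\<Union>k\<in>K. {x \<in> topspace X. f x \<in> k})"
      using UN.IH by (auto intro!: openin_Union)
    moreover have "\<Union>K \<subseteq> Y"
      using UN.IH by blast
    ultimately show ?case by simp
  qed auto
qed (auto simp: quot_top_def intro: topology_generated_by_Basis)

lemma topspace_quot_top:
  assumes "f ` topspace X \<subseteq> Y"
  shows "topspace (quot_top X f Y) = Y"
proof -
  have "{x \<in> topspace X. f x \<in> Y} = topspace X"
    using assms by auto
  then have "openin (quot_top X f Y) Y"
    by (simp add: openin_quot_top)
  then show ?thesis
    using openin_quot_top[of X f Y] by (metis openin_subset openin_topspace subset_antisym)
qed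

lemma continuous_map_into_generated_by_single:
  assumes "f ` topspace X \<subseteq> A"
  shows "continuous_map X (topology_generated_by {A}) f"
proof (rule continuous_on_generated_topo)
  fix U assume "U \<in> {A}"
  then have "f -` U \<inter> topspace X = topspace X" using assms by blast
  then show "openin X (f -` U \<inter> topspace X)" by simp
qed (use assms in simp)

lemma group_topology_generated_by_carrier:
  "group G \<Longrightarrow> group_topology G (topology_generated_by {carrier G})"
  by (auto simp: group_topology_def monoid.m_closed[OF group.is_monoid] intro!: continuous_map_into_generated_by_single)

context
  fixes X :: "'a topology"
begin

definition free_top_basis :: "('a \<times> bool) list set set" where
  "free_top_basis = \<Union> {Collect (openin T) | T. group_topology (free_grp (topspace X)) T \<and>
                                                continuous_map X T free_gen}"

lemma free_top_eq: "free_top X = topology_generated_by free_top_basis"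
  by (simp add: free_top_def free_top_basis_def)

lemma openin_free_topI:
  assumes "group_topology (free_grp (topspace X)) T" "continuous_map X T free_gen" "openin T U"
  shows "openin (free_top X) U"
  unfolding free_top_eq
  by (rule topology_generated_by_Basis) (use assms in \<open>auto simp: free_top_basis_def\<close>)

lemma Union_free_top_basis: "\<Union> free_top_basis = carrier (free_grp (topspace X))"
proof
  show "\<Union> free_top_basis \<subseteq> carrier (free_grp (topspace X))"
    unfolding free_top_basis_def group_topology_def by (auto dest: openin_subset)
  let ?T = "topology_generated_by {carrier (free_grp (topspace X))}"
  have "group_topology (free_grp (topspace X)) ?T" "continuous_map X ?T free_gen"
    by (auto simp: group_free_grp group_topology_generated_by_carrier free_gen_in_carrier
             intro!: continuous_map_into_generated_by_single)
  moreover have "openin ?T (carrier (free_grp (topspace X)))"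
    by (simp add: topology_generated_by_Basis)
  ultimately show "carrier (free_grp (topspace X)) \<subseteq> \<Union> free_top_basis"
    unfolding free_top_basis_def by blast
qed

lemma topspace_free_top: "topspace (free_top X) = carrier (free_grp (topspace X))"
  by (simp add: free_top_eq Union_free_top_basis)

lemma continuous_map_free_gen: "continuous_map X (free_top X) free_gen"
  unfolding free_top_eq
proof (rule continuous_on_generated_topo)
  fix U assume "U \<in> free_top_basis"
  then obtain T where "continuous_map X T free_gen" "openin T U"
    by (auto simp: free_top_basis_def)
  then have "openin X {x \<in> topspace X. free_gen x \<in> U}"
    by (rule openin_continuous_map_preimage)
  moreover have "{x \<in> topspace X. free_gen x \<in> U} = free_gen -` U \<inter> topspace X"
    by blast
  ultimately show "openin X (free_gen -` U \<inter> topspace X)"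
    by simp
qed (auto simp: Union_free_top_basis free_gen_in_carrier)

end

section \<open>Open subgroups of semitopological groups\<close>

definition semitopological_group :: "('g, 'm) monoid_scheme \<Rightarrow> 'g topology \<Rightarrow> bool" where
  "semitopological_group G T \<longleftrightarrow> group G \<and> topspace T = carrier G \<and>
     (\<forall>g \<in> carrier G. continuous_map T T (\<lambda>x. g \<otimes>\<^bsub>G\<^esub> x) \<and>
                      continuous_map T T (\<lambda>x. x \<otimes>\<^bsub>G\<^esub> g))"

lemma quasitopological_imp_semitopological_group:
  "quasitopological_group G T \<Longrightarrow> semitopological_group G T"
  by (simp add: quasitopological_group_def semitopological_group_def)

lemma group_topology_pullback:
  assumes "group_hom F G f" "group_topology G T"
  shows "group_topology F (pullback_topology (carrier F) f T)"
proof -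
  interpret group_hom F G f by fact
  let ?P = "pullback_topology (carrier F) f T"
  have top: "topspace ?P = carrier F"
    using assms(2) by (auto simp: topspace_pullback_topology group_topology_def)
  have f: "continuous_map ?P T f"
    using continuous_map_pullback[OF continuous_map_id] by (simp add: o_def)
  have "continuous_map (prod_topology ?P ?P) (prod_topology T T) (\<lambda>p. (f (fst p), f (snd p)))"
    using continuous_map_compose[OF continuous_map_fst f] continuous_map_compose[OF continuous_map_snd f]
    by (intro continuous_map_pairedI) (simp_all add: o_def)
  then have "continuous_map (prod_topology ?P ?P) T (\<lambda>p. f (fst p) \<otimes>\<^bsub>G\<^esub> f (snd p))"
    using continuous_map_compose assms(2) by (fastforce simp: group_topology_def o_def)
  then have "continuous_map (prod_topology ?P ?P) T (f \<circ> (\<lambda>p. fst p \<otimes>\<^bsub>F\<^esub> snd p))"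
    by (rule continuous_map_eq) (auto simp: top)
  moreover have "continuous_map ?P T (f \<circ> (\<lambda>x. inv\<^bsub>F\<^esub> x))"
    using continuous_map_compose[OF f, of T "\<lambda>x. inv\<^bsub>G\<^esub> x"] assms(2)
    by (auto simp: group_topology_def top o_def elim!: continuous_map_eq)
  ultimately show ?thesis
    by (auto simp: group_topology_def top intro!: continuous_map_pullback')
qed

text \<open>For a subgroup \<open>H\<close>, \<open>two_sided_translate G H a b\<close> is the set \<open>b H a\<inverse>\<close>.\<close>

definition two_sided_translate :: "('g, 'm) monoid_scheme \<Rightarrow> 'g set \<Rightarrow> 'g \<Rightarrow> 'g \<Rightarrow> 'g set" where
  "two_sided_translate G H a b = {x \<in> carrier G. inv\<^bsub>G\<^esub> b \<otimes>\<^bsub>G\<^esub> x \<otimes>\<^bsub>G\<^esub> a \<in> H}"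

definition translates_topology :: "('g, 'm) monoid_scheme \<Rightarrow> 'g set \<Rightarrow> 'g topology" where
  "translates_topology G H = topology_generated_by
     {two_sided_translate G H a b | a b. a \<in> carrier G \<and> b \<in> carrier G}"

lemma openin_translates_topology:
  "a \<in> carrier G \<Longrightarrow> b \<in> carrier G \<Longrightarrow> openin (translates_topology G H) (two_sided_translate G H a b)"
  unfolding translates_topology_def by (rule topology_generated_by_Basis) blast

context group
begin

context
  fixes H assumes H: "subgroup H G"
begin

lemma Union_two_sided_translates:
  "\<Union> {two_sided_translate G H a b | a b. a \<in> carrier G \<and> b \<in> carrier G} = carrier G"
proof
  have "x \<in> two_sided_translate G H \<one> x" if "x \<in> carrier G" for x
    using that H by (simp add: two_sided_translate_def subgroup.one_closed)
  then show "carrier G \<subseteq> \<Union> {two_sided_translate G H a b | a b. a \<in> carrier G \<and> b \<in> carrier G}"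
    by blast
qed (auto simp: two_sided_translate_def)

lemma topspace_translates_topology: "topspace (translates_topology G H) = carrier G"
  by (simp add: translates_topology_def Union_two_sided_translates)

lemma continuous_map_translates_topologyI:
  assumes "f ` topspace Z \<subseteq> carrier G"
    and "\<And>a b. a \<in> carrier G \<Longrightarrow> b \<in> carrier G \<Longrightarrow>
           openin Z {z \<in> topspace Z. f z \<in> two_sided_translate G H a b}"
  shows "continuous_map Z (translates_topology G H) f"
  unfolding translates_topology_def
proof (rule continuous_on_generated_topo)
  fix U assume "U \<in> {two_sided_translate G H a b | a b. a \<in> carrier G \<and> b \<in> carrier G}"
  then obtain a b where "a \<in> carrier G" "b \<in> carrier G" "U = two_sided_translate G H a b"
    by blast
  moreover have "f -` U \<inter> topspace Z = {z \<in> topspace Z. f z \<in> U}"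
    by blast
  ultimately show "openin Z (f -` U \<inter> topspace Z)"
    using assms(2) by simp
qed (simp add: Union_two_sided_translates assms(1))

lemma mult_vimage_two_sided_translate:
  assumes "a \<in> carrier G" "b \<in> carrier G"
  shows "{p \<in> carrier G \<times> carrier G. fst p \<otimes> snd p \<in> two_sided_translate G H a b}
           = (\<Union>c\<in>carrier G. two_sided_translate G H c b \<times> two_sided_translate G H a c)"
proof (intro equalityI subsetI)
  fix p assume "p \<in> {p \<in> carrier G \<times> carrier G. fst p \<otimes> snd p \<in> two_sided_translate G H a b}"
  then obtain u v where p: "p = (u, v)" "u \<in> carrier G" "v \<in> carrier G"
    and "inv b \<otimes> u \<otimes> (v \<otimes> a) \<in> H"
    using assms by (auto simp: two_sided_translate_def m_assoc)
  moreover have "inv (v \<otimes> a) \<otimes> v \<otimes> a \<in> H"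
    using p assms H by (simp add: m_assoc subgroup.one_closed)
  ultimately show "p \<in> (\<Union>c\<in>carrier G. two_sided_translate G H c b \<times> two_sided_translate G H a c)"
    using assms by (auto simp: two_sided_translate_def)
next
  fix p assume "p \<in> (\<Union>c\<in>carrier G. two_sided_translate G H c b \<times> two_sided_translate G H a c)"
  then obtain c u v where c: "c \<in> carrier G" and p: "p = (u, v)" "u \<in> carrier G" "v \<in> carrier G"
    and "(inv b \<otimes> u \<otimes> c) \<otimes> (inv c \<otimes> v \<otimes> a) \<in> H"
    using H by (auto simp: two_sided_translate_def intro: subgroup.m_closed)
  moreover have "(inv b \<otimes> u \<otimes> c) \<otimes> (inv c \<otimes> v \<otimes> a) = inv b \<otimes> (u \<otimes> v) \<otimes> a"
    using assms c p by (simp add: m_assoc) (simp add: m_assoc[symmetric])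
  ultimately show "p \<in> {p \<in> carrier G \<times> carrier G. fst p \<otimes> snd p \<in> two_sided_translate G H a b}"
    using assms by (simp add: two_sided_translate_def)
qed

lemma inv_vimage_two_sided_translate:
  assumes "a \<in> carrier G" "b \<in> carrier G"
  shows "{x \<in> carrier G. inv x \<in> two_sided_translate G H a b} = two_sided_translate G H b a"
proof -
  have "inv (inv b \<otimes> inv x \<otimes> a) = inv a \<otimes> x \<otimes> b" if "x \<in> carrier G" for x
    using that assms by (simp add: inv_mult_group m_assoc)
  moreover have "inv (inv a \<otimes> x \<otimes> b) = inv b \<otimes> inv x \<otimes> a" if "x \<in> carrier G" for x
    using that assms by (simp add: inv_mult_group m_assoc)
  ultimately show ?thesis
    using assms by (auto simp: two_sided_translate_def dest: subgroup.m_inv_closed[OF H])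
qed

lemma group_topology_translates_topology: "group_topology G (translates_topology G H)"
  unfolding group_topology_def topspace_translates_topology
proof (intro conjI continuous_map_translates_topologyI)
  fix a b assume ab: "a \<in> carrier G" "b \<in> carrier G"
  show "openin (prod_topology (translates_topology G H) (translates_topology G H))
          {p \<in> topspace (prod_topology (translates_topology G H) (translates_topology G H)).
             fst p \<otimes> snd p \<in> two_sided_translate G H a b}"
    unfolding topspace_prod_topology topspace_translates_topology mult_vimage_two_sided_translate[OF ab]
    using ab by (intro openin_Union) (auto simp: openin_prod_Times_iff openin_translates_topology)
  show "openin (translates_topology G H)
          {x \<in> topspace (translates_topology G H). inv x \<in> two_sided_translate G H a b}"
    unfolding topspace_translates_topology inv_vimage_two_sided_translate[OF ab]
    using ab by (simp add: openin_translates_topology)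
qed (auto simp: topspace_translates_topology)

lemma continuous_map_id_translates_topology:
  assumes "semitopological_group G T" "openin T H"
  shows "continuous_map T (translates_topology G H) id"
proof (rule continuous_map_translates_topologyI)
  fix a b assume ab: "a \<in> carrier G" "b \<in> carrier G"
  have "continuous_map T T ((\<lambda>x. inv b \<otimes> x) \<circ> (\<lambda>x. x \<otimes> a))"
    using assms(1) ab by (intro continuous_map_compose) (auto simp: semitopological_group_def)
  then have "openin T {x \<in> topspace T. ((\<lambda>x. inv b \<otimes> x) \<circ> (\<lambda>x. x \<otimes> a)) x \<in> H}"
    using assms(2) by (rule openin_continuous_map_preimage)
  then show "openin T {x \<in> topspace T. id x \<in> two_sided_translate G H a b}"
    using assms(1) ab by (simp add: semitopological_group_def two_sided_translate_def m_assoc cong: conj_cong)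
qed (use assms(1) in \<open>simp add: semitopological_group_def\<close>)

end

end

lemma openin_tau_top:
  assumes "topspace T = carrier G"
  shows "openin (tau_top G T) U \<longleftrightarrow>
           U \<subseteq> carrier G \<and> openin (free_top T) {w \<in> carrier (free_grp (carrier G)). mult_epi G w \<in> U}"
  using assms by (simp add: tau_top_def openin_quot_top topspace_free_top)

lemma openin_tau_top_imp_openin:
  assumes "group G" "topspace T = carrier G" "openin (tau_top G T) U"
  shows "openin T U"
proof -
  interpret group G by fact
  have "openin T {s \<in> topspace T. free_gen s \<in> {w \<in> carrier (free_grp (carrier G)). mult_epi G w \<in> U}}"
    using continuous_map_free_gen[of T] assms(2,3)
    by (intro openin_continuous_map_preimage) (auto simp: openin_tau_top)
  moreover have "U \<subseteq> carrier G"
    using assms(2,3) by (simp add: openin_tau_top)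
  ultimately show ?thesis
    using assms(2) by (simp add: free_gen_in_carrier cong: conj_cong) (simp add: Collect_conj_eq Int_absorb1)
qed

lemma open_subgroup_imp_openin_tau_top:
  assumes "semitopological_group G T" "subgroup H G" "openin T H"
  shows "openin (tau_top G T) H"
proof -
  interpret group G
    using assms(1) by (simp add: semitopological_group_def)
  have top: "topspace T = carrier G"
    using assms(1) by (simp add: semitopological_group_def)
  let ?F = "free_grp (carrier G)"
  let ?P = "pullback_topology (carrier ?F) (mult_epi G) (translates_topology G H)"
  have "group_topology ?F ?P"
    using group_hom_mult_epi group_topology_translates_topology[OF assms(2)]
    by (rule group_topology_pullback)
  moreover have "continuous_map T ?P free_gen"
  proof (rule continuous_map_pullback')
    show "continuous_map T (translates_topology G H) (mult_epi G \<circ> free_gen)"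
      using continuous_map_id_translates_topology[OF assms(2,1,3)]
      by (rule continuous_map_eq) (simp add: top)
  qed (auto simp: top free_gen_in_carrier)
  moreover have "openin ?P {w \<in> carrier ?F. mult_epi G w \<in> H}"
  proof -
    have "{w \<in> carrier ?F. mult_epi G w \<in> H} = mult_epi G -` two_sided_translate G H \<one>\<^bsub>G\<^esub> \<one>\<^bsub>G\<^esub> \<inter> carrier ?F"
      using group_hom.hom_closed[OF group_hom_mult_epi] by (auto simp: two_sided_translate_def)
    then show ?thesis
      unfolding openin_pullback_topology using openin_translates_topology[of "\<one>\<^bsub>G\<^esub>" G "\<one>\<^bsub>G\<^esub>" H] by blast
  qed
  ultimately show ?thesis
    using top assms(2) by (auto simp: openin_tau_top subgroup.subset intro: openin_free_topI)
qed

theorem open_subgroups_tau_top: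
  assumes "semitopological_group G T" "subgroup H G"
  shows "openin (tau_top G T) H \<longleftrightarrow> openin T H"
  using assms open_subgroup_imp_openin_tau_top openin_tau_top_imp_openin
  by (auto simp: semitopological_group_def)

section \<open>The fundamental group is a semitopological group\<close>

lemma continuous_map_top_of_set_compose:
  assumes "continuous_map (top_of_set T) X g" "continuous_on S \<phi>" "\<phi> ` S \<subseteq> T"
  shows "continuous_map (top_of_set S) X (\<lambda>x. g (\<phi> x))"
  using continuous_map_compose[of "top_of_set S" "top_of_set T" \<phi> X g] assms
  by (simp add: o_def image_subset_iff_funcset)

lemma continuous_map_top_of_set_cases_le:
  fixes p :: "'b::topological_space \<Rightarrow> real"
  assumes "continuous_on S p"
    and "continuous_map (top_of_set {x\<in>S. p x \<le> c}) X f"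
    and "continuous_map (top_of_set {x\<in>S. c \<le> p x}) X g"
    and "\<And>x. x \<in> S \<Longrightarrow> p x = c \<Longrightarrow> f x = g x"
  shows "continuous_map (top_of_set S) X (\<lambda>x. if p x \<le> c then f x else g x)"
  using assms
  by (intro continuous_map_cases_le) (simp_all add: subtopology_subtopology Int_def)

locale pointed_space =
  fixes X :: "'a topology" and x0 :: 'a
  assumes basepoint: "x0 \<in> topspace X"
begin

abbreviation \<Omega> :: "(real \<Rightarrow> 'a) set" where
  "\<Omega> \<equiv> loop_space X x0"

lemma path_homotopic_refl: "g \<in> \<Omega> \<Longrightarrow> path_homotopic X x0 g g"
  by (simp add: path_homotopic_def loop_space_def pathin_def)

lemma path_homotopic_sym: "path_homotopic X x0 g h \<Longrightarrow> path_homotopic X x0 h g"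
  by (simp add: path_homotopic_def homotopic_with_sym)

lemma path_homotopic_trans:
  "path_homotopic X x0 g h \<Longrightarrow> path_homotopic X x0 h k \<Longrightarrow> path_homotopic X x0 g k"
  unfolding path_homotopic_def by (rule homotopic_with_trans)

lemma path_homotopic_cong:
  assumes "path_homotopic X x0 f g" "\<And>t. t \<in> {0..1} \<Longrightarrow> f' t = f t" "\<And>t. t \<in> {0..1} \<Longrightarrow> g' t = g t"
  shows "path_homotopic X x0 f' g'"
  using assms unfolding path_homotopic_def by (auto elim!: homotopic_with_eq)

lemma loop_class_eqI: "path_homotopic X x0 g h \<Longrightarrow> loop_class X x0 g = loop_class X x0 h"
  unfolding loop_class_def using path_homotopic_sym path_homotopic_trans by blast

lemma const_in_loop_space: "(\<lambda>t. x0) \<in> \<Omega>"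
  using basepoint by (simp add: loop_space_def)

lemma reverse_in_loop_space:
  assumes "g \<in> \<Omega>"
  shows "(\<lambda>t. g (1 - t)) \<in> \<Omega>"
proof -
  have "continuous_map (top_of_set {0..1}) X g"
    using assms by (simp add: loop_space_def pathin_def)
  then have "continuous_map (top_of_set {0..1}) X (\<lambda>t. g (1 - t))"
    by (rule continuous_map_top_of_set_compose) (auto intro!: continuous_intros)
  then show ?thesis
    using assms by (simp add: loop_space_def pathin_def)
qed

lemma loop_concat_in_loop_space:
  assumes "g \<in> \<Omega>" "h \<in> \<Omega>"
  shows "loop_concat g h \<in> \<Omega>"
proof -
  have g: "continuous_map (top_of_set {0..1}) X g" and h: "continuous_map (top_of_set {0..1}) X h"
    using assms by (auto simp: loop_space_def pathin_def)
  have "g (2 * t) = h (2 * t - 1)" if "t = 1/2" for t :: real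
    using assms unfolding that by (simp add: loop_space_def)
  then have "continuous_map (top_of_set {0..1}) X (\<lambda>t. if t \<le> 1/2 then g (2 * t) else h (2 * t - 1))"
    by (intro continuous_map_top_of_set_cases_le continuous_map_top_of_set_compose[OF g]
              continuous_map_top_of_set_compose[OF h])
       (auto intro!: continuous_intros)
  then show ?thesis
    using assms by (auto simp: loop_space_def pathin_def loop_concat_def)
qed

lemma path_homotopic_loop_concat:
  assumes "path_homotopic X x0 a a'" "path_homotopic X x0 b b'"
  shows "path_homotopic X x0 (loop_concat a b) (loop_concat a' b')"
proof -
  obtain ha :: "real \<times> real \<Rightarrow> 'a" where ha: "continuous_map (top_of_set ({0..1} \<times> {0..1})) X ha"
      "\<forall>x. ha (0, x) = a x" "\<forall>x. ha (1, x) = a' x" "\<forall>t\<in>{0..1}. ha (t, 0) = x0 \<and> ha (t, 1) = x0"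
    using assms(1) unfolding path_homotopic_def homotopic_with_def prod_topology_subtopology_eu by blast
  obtain hb :: "real \<times> real \<Rightarrow> 'a" where hb: "continuous_map (top_of_set ({0..1} \<times> {0..1})) X hb"
      "\<forall>x. hb (0, x) = b x" "\<forall>x. hb (1, x) = b' x" "\<forall>t\<in>{0..1}. hb (t, 0) = x0 \<and> hb (t, 1) = x0"
    using assms(2) unfolding path_homotopic_def homotopic_with_def prod_topology_subtopology_eu by blast
  define k where
    "k = (\<lambda>z. if snd z \<le> 1/2 then ha (fst z, 2 * snd z) else hb (fst z, 2 * snd z - 1))"
  have "ha (fst z, 2 * snd z) = hb (fst z, 2 * snd z - 1)" if "z \<in> {0..1} \<times> {0..1}" "snd z = 1/2" for z
  proof -
    have "2 * snd z = 1" "2 * snd z - 1 = 0"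
      using that(2) by simp_all
    then show ?thesis
      using that(1) ha(4) hb(4) by auto
  qed
  then have "continuous_map (top_of_set ({0..1} \<times> {0..1})) X k"
    unfolding k_def
    by (intro continuous_map_top_of_set_cases_le continuous_map_top_of_set_compose[OF ha(1)]
              continuous_map_top_of_set_compose[OF hb(1)])
       (auto intro!: continuous_intros)
  moreover have "\<forall>t\<in>{0..1}. k (t, 0) = x0 \<and> k (t, 1) = x0"
    using ha hb by (simp add: k_def)
  ultimately show ?thesis
    using ha hb unfolding path_homotopic_def homotopic_with_def
    by (auto simp: k_def loop_concat_def)
qed

text \<open>The homotopy is the straight-line homotopy between the two parametrisations.\<close>

lemma path_homotopic_reparametrize:
  assumes g: "g \<in> \<Omega>"
    and "continuous_on {0..1} \<phi>" "continuous_on {0..1} \<psi>"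
    and "\<phi> ` {0..1} \<subseteq> {0..1}" "\<psi> ` {0..1} \<subseteq> {0..1}"
    and "\<phi> 0 = \<psi> 0" "\<phi> 1 = \<psi> 1" "g (\<phi> 0) = x0" "g (\<phi> 1) = x0"
  shows "path_homotopic X x0 (\<lambda>t. g (\<phi> t)) (\<lambda>t. g (\<psi> t))"
proof -
  define k where "k = (\<lambda>z::real \<times> real. g ((1 - fst z) * \<phi> (snd z) + fst z * \<psi> (snd z)))"
  have "continuous_map (top_of_set {0..1}) X g"
    using g by (simp add: loop_space_def pathin_def)
  then have "continuous_map (top_of_set ({0..1} \<times> {0..1})) X k"
    unfolding k_def
  proof (rule continuous_map_top_of_set_compose)
    have "continuous_on ({0..1} \<times> {0..1}) (\<lambda>z. \<phi> (snd z))" "continuous_on ({0..1} \<times> {0..1}) (\<lambda>z. \<psi> (snd z))"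
      using assms(2,3) by (auto intro: continuous_on_compose2[OF _ continuous_on_snd])
    then show "continuous_on ({0..1} \<times> {0..1}) (\<lambda>z. (1 - fst z) * \<phi> (snd z) + fst z * \<psi> (snd z))"
      by (intro continuous_intros)
    have "(1 - s) *\<^sub>R \<phi> t + s *\<^sub>R \<psi> t \<in> {0..1}" if "s \<in> {0..1}" "t \<in> {0..1}" for s t
      using that assms(4,5) by (intro convexD) (auto simp: image_subset_iff)
    then show "(\<lambda>z. (1 - fst z) * \<phi> (snd z) + fst z * \<psi> (snd z)) ` ({0..1} \<times> {0..1}) \<subseteq> {0..1}"
      by auto
  qed
  moreover have "\<forall>t\<in>{0..1}. k (t, 0) = x0 \<and> k (t, 1) = x0"
    using assms(6-9) by (simp add: k_def algebra_simps)
  ultimately show ?thesis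
    unfolding path_homotopic_def homotopic_with_def by (auto simp: k_def)
qed

lemma path_homotopic_loop_concat_const_left:
  assumes g: "g \<in> \<Omega>"
  shows "path_homotopic X x0 (loop_concat (\<lambda>t. x0) g) g"
proof -
  have "path_homotopic X x0 (\<lambda>t. g (max 0 (2 * t - 1))) (\<lambda>t. g t)"
    using g by (intro path_homotopic_reparametrize) (auto simp: loop_space_def intro!: continuous_intros)
  moreover have "loop_concat (\<lambda>t. x0) g t = g (max 0 (2 * t - 1))" for t
  proof (cases "t \<le> 1/2")
    case True
    then have "max 0 (2 * t - 1) = 0"
      by (simp add: max_def)
    then show ?thesis
      using g True by (simp add: loop_concat_def loop_space_def)
  qed (simp add: loop_concat_def max_def)
  ultimately show ?thesis
    by (rule path_homotopic_cong) auto
qed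

lemma path_homotopic_loop_concat_reverse:
  assumes g: "g \<in> \<Omega>"
  shows "path_homotopic X x0 (loop_concat (\<lambda>t. g (1 - t)) g) (\<lambda>t. x0)"
proof -
  have "path_homotopic X x0 (\<lambda>t. g \<bar>1 - 2 * t\<bar>) (\<lambda>t. g 1)"
    using g by (intro path_homotopic_reparametrize) (auto simp: loop_space_def intro!: continuous_intros)
  moreover have "loop_concat (\<lambda>t. g (1 - t)) g t = g \<bar>1 - 2 * t\<bar>" for t
    by (cases "t \<le> 1/2") (auto simp: loop_concat_def abs_if)
  ultimately show ?thesis
    by (rule path_homotopic_cong) (use g in \<open>auto simp: loop_space_def\<close>)
qed

text \<open>The reparametrisation takes \<open>[0,1/4]\<close>, \<open>[1/4,1/2]\<close>, \<open>[1/2,1]\<close> affinely onto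
  \<open>[0,1/2]\<close>, \<open>[1/2,3/4]\<close>, \<open>[3/4,1]\<close>.\<close>

lemma path_homotopic_loop_concat_assoc:
  assumes "a \<in> \<Omega>" "b \<in> \<Omega>" "c \<in> \<Omega>"
  shows "path_homotopic X x0 (loop_concat (loop_concat a b) c) (loop_concat a (loop_concat b c))"
proof -
  let ?R = "loop_concat a (loop_concat b c)"
  define \<phi> where "\<phi> = (\<lambda>t::real. min (2 * t) (min (t + 1/4) ((t + 1) / 2)))"
  have R: "?R \<in> \<Omega>"
    using assms by (intro loop_concat_in_loop_space)
  moreover have "continuous_on {0..1} \<phi>"
    unfolding \<phi>_def by (intro continuous_intros) auto
  moreover have "\<phi> ` {0..1} \<subseteq> {0..1}" "\<phi> 0 = 0" "\<phi> 1 = 1"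
    by (auto simp: \<phi>_def min_def)
  ultimately have "path_homotopic X x0 (\<lambda>t. ?R (\<phi> t)) (\<lambda>t. ?R t)"
    by (intro path_homotopic_reparametrize) (auto simp: loop_space_def)
  moreover have "loop_concat (loop_concat a b) c t = ?R (\<phi> t)" for t
  proof -
    consider "t \<le> 1/4" | "1/4 < t" "t \<le> 1/2" | "1/2 < t"
      by linarith
    then show ?thesis
    proof cases
      case 1
      then show ?thesis by (simp add: \<phi>_def loop_concat_def)
    next
      case 2
      then have "\<phi> t = t + 1/4" "2 * (2 * (t + 1/4) - 1) = 2 * (2 * t) - 1"
        by (simp_all add: \<phi>_def algebra_simps)
      then show ?thesis using 2 by (simp add: loop_concat_def)
    next
      case 3
      then have "\<phi> t = (t + 1) / 2"
        by (simp add: \<phi>_def)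
      then have "\<not> \<phi> t \<le> 1/2" "2 * \<phi> t - 1 = t" "4 * \<phi> t - 3 = 2 * t - 1"
        using 3 by (simp_all add: algebra_simps)
      then show ?thesis
        using 3 by (simp add: loop_concat_def algebra_simps)
    qed
  qed
  ultimately show ?thesis
    by (rule path_homotopic_cong) auto
qed

lemma loop_class_loop_concat:
  assumes "g \<in> \<Omega>" "h \<in> \<Omega>"
  shows "loop_class X x0 g \<otimes>\<^bsub>fund_group X x0\<^esub> loop_class X x0 h = loop_class X x0 (loop_concat g h)"
proof -
  have "(SOME h'. h' \<in> loop_class X x0 h) \<in> loop_class X x0 h" if "h \<in> \<Omega>" for h
    by (rule someI[where x = h]) (simp add: that loop_class_def path_homotopic_refl)
  then have "path_homotopic X x0 (loop_concat g h)
               (loop_concat (SOME g'. g' \<in> loop_class X x0 g) (SOME h'. h' \<in> loop_class X x0 h))"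
    using assms by (intro path_homotopic_loop_concat) (auto simp: loop_class_def)
  then show ?thesis
    by (simp add: fund_group_def loop_class_eqI)
qed

lemma carrier_fund_group: "carrier (fund_group X x0) = loop_class X x0 ` \<Omega>"
  by (simp add: fund_group_def)

lemma one_fund_group: "\<one>\<^bsub>fund_group X x0\<^esub> = loop_class X x0 (\<lambda>t. x0)"
  by (simp add: fund_group_def)

lemma group_fund_group: "group (fund_group X x0)"
proof (rule groupI)
  fix A B C assume "A \<in> carrier (fund_group X x0)" "B \<in> carrier (fund_group X x0)"
    "C \<in> carrier (fund_group X x0)"
  then obtain a b c where "a \<in> \<Omega>" "b \<in> \<Omega>" "c \<in> \<Omega>"
    and "A = loop_class X x0 a" "B = loop_class X x0 b" "C = loop_class X x0 c"
    by (auto simp: carrier_fund_group)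
  then show "A \<otimes>\<^bsub>fund_group X x0\<^esub> B \<otimes>\<^bsub>fund_group X x0\<^esub> C =
             A \<otimes>\<^bsub>fund_group X x0\<^esub> (B \<otimes>\<^bsub>fund_group X x0\<^esub> C)"
    by (simp add: loop_class_loop_concat loop_concat_in_loop_space loop_class_eqI
                  path_homotopic_loop_concat_assoc)
next
  fix A assume "A \<in> carrier (fund_group X x0)"
  then obtain g where g: "g \<in> \<Omega>" "A = loop_class X x0 g"
    by (auto simp: carrier_fund_group)
  then show "\<one>\<^bsub>fund_group X x0\<^esub> \<otimes>\<^bsub>fund_group X x0\<^esub> A = A"
    using const_in_loop_space loop_class_eqI[OF path_homotopic_loop_concat_const_left[OF g(1)]]
    by (simp add: one_fund_group loop_class_loop_concat)
  have "loop_class X x0 (\<lambda>t. g (1 - t)) \<otimes>\<^bsub>fund_group X x0\<^esub> A = \<one>\<^bsub>fund_group X x0\<^esub>"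
    using g reverse_in_loop_space loop_class_eqI[OF path_homotopic_loop_concat_reverse[OF g(1)]]
    by (simp add: loop_class_loop_concat one_fund_group)
  then show "\<exists>B\<in>carrier (fund_group X x0). B \<otimes>\<^bsub>fund_group X x0\<^esub> A = \<one>\<^bsub>fund_group X x0\<^esub>"
    using g reverse_in_loop_space by (auto simp: carrier_fund_group)
qed (auto simp: carrier_fund_group loop_class_loop_concat loop_concat_in_loop_space
          one_fund_group const_in_loop_space)

lemma Union_loop_top_subbasis:
  "\<Union> {{g \<in> \<Omega>. g ` K \<subseteq> U} | K U. compactin (top_of_set {0..1::real}) K \<and> openin X U} = \<Omega>"
proof -
  have "\<Omega> = {g \<in> \<Omega>. g ` {} \<subseteq> topspace X}"
    by simp
  then have "\<Omega> \<in> {{g \<in> \<Omega>. g ` K \<subseteq> U} | K U. compactin (top_of_set {0..1::real}) K \<and> openin X U}"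
    by blast
  then show ?thesis
    by blast
qed

lemma topspace_loop_top: "topspace (loop_top X x0) = \<Omega>"
  by (simp add: loop_top_def Union_loop_top_subbasis)

lemma openin_loop_top_subbasic:
  "compactin (top_of_set {0..1::real}) K \<Longrightarrow> openin X U \<Longrightarrow> openin (loop_top X x0) {g \<in> \<Omega>. g ` K \<subseteq> U}"
  unfolding loop_top_def by (rule topology_generated_by_Basis) blast

lemma continuous_map_loop_topI:
  assumes "h ` \<Omega> \<subseteq> \<Omega>"
    and "\<And>K U. compactin (top_of_set {0..1::real}) K \<Longrightarrow> openin X U \<Longrightarrow>
           openin (loop_top X x0) {g \<in> \<Omega>. h g ` K \<subseteq> U}"
  shows "continuous_map (loop_top X x0) (loop_top X x0) h"
proof -
  have "openin (loop_top X x0) (h -` {g \<in> \<Omega>. g ` K \<subseteq> U} \<inter> \<Omega>)"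
    if "compactin (top_of_set {0..1::real}) K" "openin X U" for K U
  proof -
    have "h -` {g \<in> \<Omega>. g ` K \<subseteq> U} \<inter> \<Omega> = {g \<in> \<Omega>. h g ` K \<subseteq> U}"
      using assms(1) by blast
    then show ?thesis
      using assms(2)[OF that] by simp
  qed
  then show ?thesis
    using assms(1)
    by (subst (2) loop_top_def, intro continuous_on_generated_topo)
       (auto simp: topspace_loop_top Union_loop_top_subbasis)
qed

lemma image_loop_concat:
  assumes "a \<in> \<Omega>" "b \<in> \<Omega>"
  shows "loop_concat a b ` K = a ` (\<lambda>t. 2 * t) ` (K \<inter> {..1/2}) \<union> b ` (\<lambda>t. 2 * t - 1) ` (K \<inter> {1/2..})"
proof -
  have "loop_concat a b t = b (2 * t - 1)" if "1/2 \<le> t" for t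
  proof (cases "t = 1/2")
    case True
    show ?thesis
      using assms unfolding True by (simp add: loop_concat_def loop_space_def)
  qed (use that in \<open>simp add: loop_concat_def\<close>)
  then have "loop_concat a b ` (K \<inter> {1/2..}) = b ` (\<lambda>t. 2 * t - 1) ` (K \<inter> {1/2..})"
    unfolding image_image by (intro image_cong) auto
  moreover have "loop_concat a b ` (K \<inter> {..1/2}) = a ` (\<lambda>t. 2 * t) ` (K \<inter> {..1/2})"
    unfolding image_image by (intro image_cong) (auto simp: loop_concat_def)
  moreover have "K = (K \<inter> {..1/2}) \<union> (K \<inter> {1/2..})"
    by auto
  ultimately show ?thesis
    by (metis image_Un sup_commute)
qed

lemma compactin_halves_stretched:
  assumes "compactin (top_of_set {0..1}) K"
  shows "compactin (top_of_set {0..1}) ((\<lambda>t::real. 2 * t) ` (K \<inter> {..1/2}))"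
    and "compactin (top_of_set {0..1}) ((\<lambda>t::real. 2 * t - 1) ` (K \<inter> {1/2..}))"
proof -
  have K: "compact K" "K \<subseteq> {0..1}"
    using assms by (auto simp: compactin_subtopology)
  have "compact ((\<lambda>t::real. 2 * t) ` (K \<inter> {..1/2}))" "compact ((\<lambda>t::real. 2 * t - 1) ` (K \<inter> {1/2..}))"
    using K by (auto intro!: compact_continuous_image compact_Int_closed continuous_intros)
  then show "compactin (top_of_set {0..1}) ((\<lambda>t::real. 2 * t) ` (K \<inter> {..1/2}))"
    and "compactin (top_of_set {0..1}) ((\<lambda>t::real. 2 * t - 1) ` (K \<inter> {1/2..}))"
    using K by (auto simp: compactin_subtopology)
qed

lemma continuous_map_loop_concat_left:
  assumes "a \<in> \<Omega>"
  shows "continuous_map (loop_top X x0) (loop_top X x0) (loop_concat a)"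
proof (rule continuous_map_loop_topI)
  fix K :: "real set" and U
  assume KU: "compactin (top_of_set {0..1}) K" "openin X U"
  let ?A = "(\<lambda>t. 2 * t) ` (K \<inter> {..1/2})" and ?B = "(\<lambda>t. 2 * t - 1) ` (K \<inter> {1/2..})"
  have "loop_concat a b ` K \<subseteq> U \<longleftrightarrow> a ` ?A \<subseteq> U \<and> b ` ?B \<subseteq> U" if "b \<in> \<Omega>" for b
    using image_loop_concat[OF assms that] by simp
  then have "{b \<in> \<Omega>. loop_concat a b ` K \<subseteq> U} = (if a ` ?A \<subseteq> U then {b \<in> \<Omega>. b ` ?B \<subseteq> U} else {})"
    by (simp cong: conj_cong)
  then show "openin (loop_top X x0) {b \<in> \<Omega>. loop_concat a b ` K \<subseteq> U}"
    using openin_loop_top_subbasic[OF compactin_halves_stretched(2)[OF KU(1)] KU(2)] by simp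
qed (use assms loop_concat_in_loop_space in blast)

lemma continuous_map_loop_concat_right:
  assumes "a \<in> \<Omega>"
  shows "continuous_map (loop_top X x0) (loop_top X x0) (\<lambda>b. loop_concat b a)"
proof (rule continuous_map_loop_topI)
  fix K :: "real set" and U
  assume KU: "compactin (top_of_set {0..1}) K" "openin X U"
  let ?A = "(\<lambda>t. 2 * t) ` (K \<inter> {..1/2})" and ?B = "(\<lambda>t. 2 * t - 1) ` (K \<inter> {1/2..})"
  have "loop_concat b a ` K \<subseteq> U \<longleftrightarrow> b ` ?A \<subseteq> U \<and> a ` ?B \<subseteq> U" if "b \<in> \<Omega>" for b
    using image_loop_concat[OF that assms] by simp
  then have "{b \<in> \<Omega>. loop_concat b a ` K \<subseteq> U} = (if a ` ?B \<subseteq> U then {b \<in> \<Omega>. b ` ?A \<subseteq> U} else {})"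
    by (simp cong: conj_cong)
  then show "openin (loop_top X x0) {b \<in> \<Omega>. loop_concat b a ` K \<subseteq> U}"
    using openin_loop_top_subbasic[OF compactin_halves_stretched(1)[OF KU(1)] KU(2)] by simp
qed (use assms loop_concat_in_loop_space in blast)

lemma topspace_fund_group_qtop: "topspace (fund_group_qtop X x0) = carrier (fund_group X x0)"
  unfolding fund_group_qtop_def
  by (rule topspace_quot_top) (simp add: topspace_loop_top carrier_fund_group)

lemma openin_fund_group_qtop:
  "openin (fund_group_qtop X x0) U \<longleftrightarrow>
     U \<subseteq> carrier (fund_group X x0) \<and> openin (loop_top X x0) {g \<in> \<Omega>. loop_class X x0 g \<in> U}"
  by (simp add: fund_group_qtop_def openin_quot_top topspace_loop_top)

lemma continuous_map_fund_group_qtopI: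
  assumes "continuous_map (loop_top X x0) (loop_top X x0) h"
    and "\<And>g. g \<in> \<Omega> \<Longrightarrow> f (loop_class X x0 g) = loop_class X x0 (h g)"
  shows "continuous_map (fund_group_qtop X x0) (fund_group_qtop X x0) f"
  unfolding continuous_map_def
proof (intro conjI allI impI)
  have "h g \<in> \<Omega>" if "g \<in> \<Omega>" for g
    using assms(1) that by (auto simp: continuous_map_def topspace_loop_top)
  then show "f \<in> topspace (fund_group_qtop X x0) \<rightarrow> topspace (fund_group_qtop X x0)"
    using assms(2) by (auto simp: topspace_fund_group_qtop carrier_fund_group)
  fix U assume "openin (fund_group_qtop X x0) U"
  then have "openin (loop_top X x0) {g \<in> topspace (loop_top X x0). h g \<in> {g \<in> \<Omega>. loop_class X x0 g \<in> U}}"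
    using assms(1) by (intro openin_continuous_map_preimage) (auto simp: openin_fund_group_qtop)
  moreover have "{g \<in> topspace (loop_top X x0). h g \<in> {g \<in> \<Omega>. loop_class X x0 g \<in> U}}
                   = {g \<in> \<Omega>. loop_class X x0 g \<in> {A \<in> topspace (fund_group_qtop X x0). f A \<in> U}}"
    using assms \<open>\<And>g. g \<in> \<Omega> \<Longrightarrow> h g \<in> \<Omega>\<close>
    by (auto simp: topspace_loop_top topspace_fund_group_qtop carrier_fund_group)
  ultimately show "openin (fund_group_qtop X x0) {A \<in> topspace (fund_group_qtop X x0). f A \<in> U}"
    by (simp add: openin_fund_group_qtop topspace_fund_group_qtop)
qed

lemma semitopological_fund_group: "semitopological_group (fund_group X x0) (fund_group_qtop X x0)"
  unfolding semitopological_group_def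
proof (intro conjI ballI group_fund_group topspace_fund_group_qtop)
  fix A assume "A \<in> carrier (fund_group X x0)"
  then obtain a where a: "a \<in> \<Omega>" "A = loop_class X x0 a"
    by (auto simp: carrier_fund_group)
  show "continuous_map (fund_group_qtop X x0) (fund_group_qtop X x0) (\<lambda>B. A \<otimes>\<^bsub>fund_group X x0\<^esub> B)"
    using a by (intro continuous_map_fund_group_qtopI[OF continuous_map_loop_concat_left])
               (simp_all add: loop_class_loop_concat)
  show "continuous_map (fund_group_qtop X x0) (fund_group_qtop X x0) (\<lambda>B. B \<otimes>\<^bsub>fund_group X x0\<^esub> A)"
    using a by (intro continuous_map_fund_group_qtopI[OF continuous_map_loop_concat_right])
               (simp_all add: loop_class_loop_concat)
qed

end

theorem corollary3p9:
  shows "(\<forall>(G :: ('g, 'm) monoid_scheme) (T :: 'g topology). quasitopological_group G T \<longrightarrow>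
            (\<forall>H. (subgroup H G \<and> openin T H) \<longleftrightarrow> (subgroup H G \<and> openin (tau_top G T) H)))
       \<and> (\<forall>(X :: 'a topology) x0. x0 \<in> topspace X \<longrightarrow>
            (\<forall>H. (subgroup H (fund_group X x0) \<and> openin (fund_group_qtop X x0) H) \<longleftrightarrow>
                 (subgroup H (fund_group X x0) \<and>
                  openin (tau_top (fund_group X x0) (fund_group_qtop X x0)) H)))"
proof (intro conjI allI impI)
  fix G :: "('g, 'm) monoid_scheme" and T :: "'g topology" and H
  assume "quasitopological_group G T"
  then show "(subgroup H G \<and> openin T H) \<longleftrightarrow> (subgroup H G \<and> openin (tau_top G T) H)"
    using open_subgroups_tau_top quasitopological_imp_semitopological_group by blast
next
  fix X :: "'a topology" and x0 H
  assume "x0 \<in> topspace X"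
  then interpret pointed_space X x0
    by unfold_locales
  show "(subgroup H (fund_group X x0) \<and> openin (fund_group_qtop X x0) H) \<longleftrightarrow>
          (subgroup H (fund_group X x0) \<and> openin (tau_top (fund_group X x0) (fund_group_qtop X x0)) H)"
    using open_subgroups_tau_top[OF semitopological_fund_group] by blast
qed

end
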